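(* Let $\mathcal{H}$ be a hedgehog with support function $h(s)=a_0+\sum_{n\geqslant1}(a_n\cos(ns)+b_n\sin(ns))$ and average width $\overline{w}$, and let $k>2$ be an integer. Then the $k$th Order Preserving Set $\mathcal{P}_k$ of $\mathcal{H}$ is a hedgehog with support function \[ h_k(s)=\frac1k\sum_{j=0}^{k-1}h\Big(s+\frac{2\pi j}{k}\Big)-\frac12\overline{w}, \] i.e. $\mathcal{P}_k(s)=h_k(s)u(s)+h_k'(s)u'(s)$ for all $s$, and \[ h_k(s)=\sum_{k\mid n,\ n>1}\big(a_n\cos(ns)+b_n\sin(ns)\big). \]
   Context: Write $u(s)=(\cos s,\sin s)$ and $u'(s)=(-\sin s,\cos s)$. A hedgehog is a closed planar curve determined by a smooth $2\pi$-periodic function $h$ (its support function; equivalently, the difference of support functions of two convex bodies) via $\mathcal{H}(s)=h(s)u(s)+h'(s)u'(s)$, $s\in[0,2\pi]$. Its average width is $\overline{w}=\frac1\pi\int_0^{2\pi}h(s)\,ds$. For $(x,y)\in\mathbb{R}^2$ let $(x,y)^\perp=(-y,x)$ and set $\mathcal{H}^\perp(s)=\mathcal{H}(s)^\perp$. The $k$th Order Preserving Set of $\mathcal{H}$ is the curve $\mathcal{P}_k(s)=\frac{1}{k}\sum_{j=1}^{k}\Big(\cos\big(\tfrac{2\pi j}{k}\big)\,\mathcal{H}\big(s+\tfrac{2\pi j}{k}\big)-\sin\big(\tfrac{2\pi j}{k}\big)\,\mathcal{H}^{\perp}\big(s+\tfrac{2\pi j}{k}\big)\Big)-\frac{1}{2}\overline{w}\,u(s)$,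 $s\in[0,2\pi]$. (The points $\mathcal{H}(s+2\pi j/k)$, $j=1,\dots,k$, form an isogonal family: their normals are spaced by angles $2\pi/k$.) *)

theory Defs
  imports "HOL-Analysis.Analysis"
begin

definition uvec :: "real \<Rightarrow> real \<times> real" where
  "uvec s = (cos s, sin s)"

definition uvec' :: "real \<Rightarrow> real \<times> real" where
  "uvec' s = (- sin s, cos s)"

definition perp :: "real \<times> real \<Rightarrow> real \<times> real" where
  "perp p = (- snd p, fst p)"

definition smooth_fun :: "(real \<Rightarrow> real) \<Rightarrow> bool" where
  "smooth_fun h \<longleftrightarrow> (\<forall>n x. ((deriv ^^ n) h) differentiable (at x))"

definition periodic_2pi :: "(real \<Rightarrow> real) \<Rightarrow> bool" where
  "periodic_2pi h \<longleftrightarrow> (\<forall>s. h (s + 2 * pi) = h s)"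

definition hedgehog :: "(real \<Rightarrow> real) \<Rightarrow> real \<Rightarrow> real \<times> real" where
  "hedgehog h s = h s *\<^sub>R uvec s + deriv h s *\<^sub>R uvec' s"

definition avg_width :: "(real \<Rightarrow> real) \<Rightarrow> real" where
  "avg_width h = (1 / pi) * integral {0..2 * pi} h"

definition ops :: "(real \<Rightarrow> real) \<Rightarrow> nat \<Rightarrow> real \<Rightarrow> real \<times> real" where
  "ops h k s =
     (1 / real k) *\<^sub>R (\<Sum>j = 1..k.
        cos (2 * pi * real j / real k) *\<^sub>R hedgehog h (s + 2 * pi * real j / real k)
      - sin (2 * pi * real j / real k) *\<^sub>R perp (hedgehog h (s + 2 * pi * real j / real k)))
     - (1 / 2 * avg_width h) *\<^sub>R uvec s"

text \<open>Fourier coefficients: h(s) = a_0 + sum_{n>=1} (a_n cos(ns) + b_n sin(ns)).\<close>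
definition fourier_a :: "(real \<Rightarrow> real) \<Rightarrow> nat \<Rightarrow> real" where
  "fourier_a h n =
     (if n = 0 then (1 / (2 * pi)) * integral {0..2 * pi} h
      else (1 / pi) * integral {0..2 * pi} (\<lambda>s. h s * cos (real n * s)))"

definition fourier_b :: "(real \<Rightarrow> real) \<Rightarrow> nat \<Rightarrow> real" where
  "fourier_b h n = (1 / pi) * integral {0..2 * pi} (\<lambda>s. h s * sin (real n * s))"

end

theory Submission
  imports Defs
begin

(* Rotation by -2 pi j/k carries the moving frame (u, u') at s + 2 pi j/k to the frame at s, so the
   isogonal average defining P_k is the hedgehog of the averaged support function h_k.

   For the Fourier expansion, integrating by parts twice bounds the coefficients of h by O(1/n^2),
   so its Fourier series converges uniformly.  The sum has the same Fourier coefficients as h, and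
   a continuous periodic g orthogonal to every cos(nt), sin(nt) vanishes: it is then orthogonal to
   p(cos t, sin t) for every polynomial p, and Stone-Weierstrass on the circle makes
   int g^2 = int g (g - p) arbitrarily small.  Averaging cos(n(s + 2 pi j/k)) over j is a sum of
   k-th roots of unity, which keeps exactly the frequencies n divisible by k; the constant term
   a_0 = w/2 cancels, and n = 1 drops out since k > 2. *)

section \<open>Orthogonality of the trigonometric system\<close>

lemma has_integral_derivative_real:
  fixes f f' :: "real \<Rightarrow> real"
  assumes "\<And>x. (f has_real_derivative f' x) (at x)" "a \<le> b"
  shows "(f' has_integral (f b - f a)) {a..b}"
  using assms
  by (intro fundamental_theorem_of_calculus)
     (auto simp: has_real_derivative_iff_has_vector_derivative[symmetric] intro: has_field_derivative_at_within)

lemma continuous_on_UNIV_integrable: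
  fixes f :: "real \<Rightarrow> real"
  shows "continuous_on UNIV f \<Longrightarrow> f integrable_on {a..b}"
  by (rule integrable_continuous_interval) (rule continuous_on_subset, auto)

lemma sin_of_int_mult_2pi [simp]: "sin (of_int j * (2*pi)) = 0"
  using sin_integer_2pi[of "of_int j"] by (simp add: mult.commute)

lemma cos_of_int_mult_2pi [simp]: "cos (of_int j * (2*pi)) = 1"
  using cos_integer_2pi[of "of_int j"] by (simp add: mult.commute)

lemma has_integral_cos_int_mult:
  "((\<lambda>t. cos (of_int j * t)) has_integral (if j = 0 then 2*pi else 0)) {0..2*pi}"
proof (cases "j = 0")
  case False
  have "((\<lambda>t. cos (of_int j * t)) has_integral
          (sin (of_int j * (2*pi)) / of_int j - sin (of_int j * 0) / of_int j)) {0..2*pi}"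
    using False by (intro has_integral_derivative_real) (auto intro!: derivative_eq_intros)
  with False show ?thesis by simp
qed (use has_integral_const_real[of "1::real" 0 "2*pi"] in simp)

lemma has_integral_sin_int_mult:
  "((\<lambda>t. sin (of_int j * t)) has_integral 0) {0..2*pi}"
proof (cases "j = 0")
  case False
  have "((\<lambda>t. sin (of_int j * t)) has_integral
          (- cos (of_int j * (2*pi)) / of_int j - - cos (of_int j * 0) / of_int j)) {0..2*pi}"
    using False by (intro has_integral_derivative_real) (auto intro!: derivative_eq_intros)
  then show ?thesis by simp
qed simp

lemma has_integral_cos_cos:
  "((\<lambda>t. cos (real n * t) * cos (real m * t)) has_integral
     (if n = m then if n = 0 then 2*pi else pi else 0)) {0..2*pi}"
proof -
  have "((\<lambda>t. (cos (of_int (int n - int m) * t) + cos (of_int (int n + int m) * t)) / 2) has_integral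
     ((if int n - int m = 0 then 2*pi else 0) + (if int n + int m = 0 then 2*pi else 0)) / 2) {0..2*pi}"
    by (intro has_integral_divide has_integral_add has_integral_cos_int_mult)
  then show ?thesis
    by (rule has_integral_eq_rhs[OF has_integral_cong[THEN iffD1], rotated])
       (auto simp: left_diff_distrib distrib_right cos_diff cos_add)
qed

lemma has_integral_sin_cos:
  "((\<lambda>t. sin (real n * t) * cos (real m * t)) has_integral 0) {0..2*pi}"
proof -
  have "((\<lambda>t. (sin (of_int (int n - int m) * t) + sin (of_int (int n + int m) * t)) / 2) has_integral
     (0 + 0) / 2) {0..2*pi}"
    by (intro has_integral_divide has_integral_add has_integral_sin_int_mult)
  then show ?thesis
    by (rule has_integral_eq_rhs[OF has_integral_cong[THEN iffD1], rotated])
       (auto simp: left_diff_distrib distrib_right sin_diff sin_add)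
qed

lemma has_integral_sin_sin:
  "((\<lambda>t. sin (real n * t) * sin (real m * t)) has_integral
     (if n = m \<and> n \<noteq> 0 then pi else 0)) {0..2*pi}"
proof -
  have "((\<lambda>t. (cos (of_int (int n - int m) * t) - cos (of_int (int n + int m) * t)) / 2) has_integral
     ((if int n - int m = 0 then 2*pi else 0) - (if int n + int m = 0 then 2*pi else 0)) / 2) {0..2*pi}"
    by (intro has_integral_divide has_integral_diff has_integral_cos_int_mult)
  then show ?thesis
    by (rule has_integral_eq_rhs[OF has_integral_cong[THEN iffD1], rotated])
       (auto simp: left_diff_distrib distrib_right cos_diff cos_add)
qed

definition fourier_term :: "(real \<Rightarrow> real) \<Rightarrow> nat \<Rightarrow> real \<Rightarrow> real" where
  "fourier_term h n t = fourier_a h n * cos (real n * t) + fourier_b h n * sin (real n * t)"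

lemma has_integral_fourier_term_cos:
  "((\<lambda>t. fourier_term h i t * cos (real m * t)) has_integral
     (if i = m then integral {0..2*pi} (\<lambda>t. h t * cos (real m * t)) else 0)) {0..2*pi}"
proof -
  have "((\<lambda>t. fourier_a h i * (cos (real i * t) * cos (real m * t))
              + fourier_b h i * (sin (real i * t) * cos (real m * t))) has_integral
         fourier_a h i * (if i = m then if i = 0 then 2*pi else pi else 0) + fourier_b h i * 0) {0..2*pi}"
    by (intro has_integral_add has_integral_mult_right has_integral_cos_cos has_integral_sin_cos)
  then show ?thesis
    unfolding fourier_term_def
    by (rule has_integral_eq_rhs[OF has_integral_cong[THEN iffD1], rotated])
       (auto simp: fourier_a_def algebra_simps)
qed

lemma has_integral_fourier_term_sin:
  "((\<lambda>t. fourier_term h i t * sin (real m * t)) has_integral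
     (if i = m then integral {0..2*pi} (\<lambda>t. h t * sin (real m * t)) else 0)) {0..2*pi}"
proof -
  have "((\<lambda>t. fourier_a h i * (sin (real m * t) * cos (real i * t))
              + fourier_b h i * (sin (real i * t) * sin (real m * t))) has_integral
         fourier_a h i * 0 + fourier_b h i * (if i = m \<and> i \<noteq> 0 then pi else 0)) {0..2*pi}"
    by (intro has_integral_add has_integral_mult_right has_integral_sin_sin has_integral_sin_cos)
  then show ?thesis
    unfolding fourier_term_def
    by (rule has_integral_eq_rhs[OF has_integral_cong[THEN iffD1], rotated])
       (auto simp: fourier_b_def algebra_simps)
qed

lemma periodic_2pi_fourier_term: "periodic_2pi (fourier_term h n)"
  using sin_of_int_mult_2pi[of "int n"] cos_of_int_mult_2pi[of "int n"]
  by (simp add: periodic_2pi_def fourier_term_def distrib_left cos_add sin_add)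

lemma continuous_on_fourier_term: "continuous_on A (fourier_term h n)"
  unfolding fourier_term_def by (intro continuous_intros)

section \<open>Periodic functions\<close>

lemma periodic_2pi_endpoints:
  assumes "periodic_2pi g"
  shows "g (2*pi) = g 0"
  using assms[unfolded periodic_2pi_def, THEN spec, of 0] by simp

lemma periodic_2pi_shift_int:
  assumes "periodic_2pi g"
  shows "g (s + 2*pi * of_int m) = g s"
proof -
  have shift_nat: "g (s + 2*pi * real n) = g s" for s n
  proof (induction n)
    case (Suc n)
    have "g (s + 2*pi * real (Suc n)) = g ((s + 2*pi * real n) + 2*pi)"
      by (simp add: algebra_simps)
    with assms Suc show ?case by (simp add: periodic_2pi_def)
  qed simp
  show ?thesis
  proof (cases "m \<ge> 0")
    case True
    then show ?thesis using shift_nat[of s "nat m"] by simp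
  next
    case False
    then have "g s = g ((s + 2*pi * of_int m) + 2*pi * real (nat (- m)))" by simp
    then show ?thesis using shift_nat by simp
  qed
qed

lemma periodic_2pi_eqI:
  assumes "periodic_2pi f" "periodic_2pi g" "\<And>t. t \<in> {0..2*pi} \<Longrightarrow> f t = g t"
  shows "f t = g t"
proof -
  define m where "m = \<lfloor>t / (2*pi)\<rfloor>"
  have "of_int m \<le> t / (2*pi)" "t / (2*pi) < of_int m + 1"
    unfolding m_def by linarith+
  then have "t - 2*pi * of_int m \<in> {0..2*pi}"
    by (simp add: field_simps)
  then have "f (t - 2*pi * of_int m) = g (t - 2*pi * of_int m)"
    using assms(3) by blast
  then show ?thesis
    using periodic_2pi_shift_int[OF assms(1), of "t - 2*pi * of_int m" m]
          periodic_2pi_shift_int[OF assms(2), of "t - 2*pi * of_int m" m]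
    by simp
qed

lemma periodic_2pi_deriv:
  assumes "periodic_2pi f"
  shows "periodic_2pi (deriv f)"
proof -
  have "(\<lambda>x. f (x + 2*pi)) = f" using assms by (simp add: periodic_2pi_def)
  then show ?thesis
    unfolding periodic_2pi_def deriv_def DERIV_shift by simp
qed

lemma periodic_2pi_derivative:
  assumes "\<And>x. (f has_real_derivative f' x) (at x)" "periodic_2pi f"
  shows "periodic_2pi f'"
proof -
  have "f' = deriv f" using assms(1) by (auto intro: DERIV_imp_deriv[symmetric])
  then show ?thesis using periodic_2pi_deriv[OF assms(2)] by simp
qed

section \<open>Uniqueness of Fourier coefficients\<close>

text \<open>Integer (possibly negative) frequencies make this class closed under multiplication by
  \<open>cos t\<close> and \<open>sin t\<close>: the product-to-sum formulas shift the frequency by \<open>\<plusminus>1\<close>.\<close>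
definition trig_orthogonal :: "(real \<Rightarrow> real) \<Rightarrow> bool" where
  "trig_orthogonal f \<longleftrightarrow>
     (\<forall>n::int. ((\<lambda>t. f t * cos (of_int n * t)) has_integral 0) {0..2*pi}
             \<and> ((\<lambda>t. f t * sin (of_int n * t)) has_integral 0) {0..2*pi})"

lemma trig_orthogonalD:
  assumes "trig_orthogonal f"
  shows "((\<lambda>t. f t * cos (of_int n * t)) has_integral 0) {0..2*pi}"
    and "((\<lambda>t. f t * sin (of_int n * t)) has_integral 0) {0..2*pi}"
  using assms by (simp_all add: trig_orthogonal_def)

lemma trig_orthogonalI:
  assumes "\<And>n::nat. ((\<lambda>t. f t * cos (real n * t)) has_integral 0) {0..2*pi}"
    and "\<And>n::nat. ((\<lambda>t. f t * sin (real n * t)) has_integral 0) {0..2*pi}"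
  shows "trig_orthogonal f"
  unfolding trig_orthogonal_def
proof
  fix n :: int
  show "((\<lambda>t. f t * cos (of_int n * t)) has_integral 0) {0..2*pi}
      \<and> ((\<lambda>t. f t * sin (of_int n * t)) has_integral 0) {0..2*pi}"
  proof (cases "n \<ge> 0")
    case True
    then show ?thesis using assms[of "nat n"] by simp
  next
    case False
    have "((\<lambda>t. - (f t * sin (real (nat (- n)) * t))) has_integral - 0) {0..2*pi}"
      by (intro has_integral_neg assms)
    with False assms(1)[of "nat (- n)"] show ?thesis by simp
  qed
qed

lemma trig_orthogonal_lincomb:
  assumes "trig_orthogonal f" "trig_orthogonal g"
  shows "trig_orthogonal (\<lambda>t. a * f t + b * g t)"
  unfolding trig_orthogonal_def
proof
  fix n :: int
  have "((\<lambda>t. a * (f t * cos (of_int n * t)) + b * (g t * cos (of_int n * t))) has_integral a * 0 + b * 0) {0..2*pi}"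
       "((\<lambda>t. a * (f t * sin (of_int n * t)) + b * (g t * sin (of_int n * t))) has_integral a * 0 + b * 0) {0..2*pi}"
    by (intro has_integral_add has_integral_mult_right trig_orthogonalD assms)+
  then show "((\<lambda>t. (a * f t + b * g t) * cos (of_int n * t)) has_integral 0) {0..2*pi}
           \<and> ((\<lambda>t. (a * f t + b * g t) * sin (of_int n * t)) has_integral 0) {0..2*pi}"
    by (simp add: algebra_simps)
qed

lemma trig_orthogonal_mult_cos:
  assumes "trig_orthogonal f"
  shows "trig_orthogonal (\<lambda>t. f t * cos t)"
  unfolding trig_orthogonal_def
proof
  fix n :: int
  have "((\<lambda>t. (f t * cos (of_int (n + 1) * t) + f t * cos (of_int (n - 1) * t)) / 2) has_integral (0 + 0) / 2) {0..2*pi}"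
       "((\<lambda>t. (f t * sin (of_int (n + 1) * t) + f t * sin (of_int (n - 1) * t)) / 2) has_integral (0 + 0) / 2) {0..2*pi}"
    by (intro has_integral_add has_integral_divide trig_orthogonalD assms)+
  then show "((\<lambda>t. f t * cos t * cos (of_int n * t)) has_integral 0) {0..2*pi}
           \<and> ((\<lambda>t. f t * cos t * sin (of_int n * t)) has_integral 0) {0..2*pi}"
    by (simp add: algebra_simps cos_add cos_diff sin_add sin_diff)
qed

lemma trig_orthogonal_mult_sin:
  assumes "trig_orthogonal f"
  shows "trig_orthogonal (\<lambda>t. f t * sin t)"
  unfolding trig_orthogonal_def
proof
  fix n :: int
  have "((\<lambda>t. (f t * sin (of_int (n + 1) * t) - f t * sin (of_int (n - 1) * t)) / 2) has_integral (0 - 0) / 2) {0..2*pi}"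
       "((\<lambda>t. (f t * cos (of_int (n - 1) * t) - f t * cos (of_int (n + 1) * t)) / 2) has_integral (0 - 0) / 2) {0..2*pi}"
    by (intro has_integral_diff has_integral_divide trig_orthogonalD assms)+
  then show "((\<lambda>t. f t * sin t * cos (of_int n * t)) has_integral 0) {0..2*pi}
           \<and> ((\<lambda>t. f t * sin t * sin (of_int n * t)) has_integral 0) {0..2*pi}"
    by (simp add: algebra_simps cos_add cos_diff sin_add sin_diff)
qed

lemma trig_orthogonal_mult_polynomial:
  fixes p :: "real \<times> real \<Rightarrow> real"
  assumes "real_polynomial_function p" "trig_orthogonal f"
  shows "trig_orthogonal (\<lambda>t. f t * p (cos t, sin t))"
  using assms
proof (induction p arbitrary: f rule: real_polynomial_function.induct)
  case (linear p)
  have decomp: "p (x, y) = x * p (1, 0) + y * p (0, 1)" for x y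
  proof -
    have lin: "linear p" using linear.hyps by (rule bounded_linear.linear)
    have "p (x, y) = p (x *\<^sub>R (1, 0) + y *\<^sub>R (0, 1))" by simp
    also have "\<dots> = p (x *\<^sub>R (1, 0)) + p (y *\<^sub>R (0, 1))" by (rule linear_add[OF lin])
    finally show ?thesis using linear_scale[OF lin, of x "(1, 0)"] linear_scale[OF lin, of y "(0, 1)"] by simp
  qed
  have "trig_orthogonal (\<lambda>t. p (1, 0) * (f t * cos t) + p (0, 1) * (f t * sin t))"
    by (intro trig_orthogonal_lincomb trig_orthogonal_mult_cos trig_orthogonal_mult_sin linear.prems)
  moreover have "f t * p (cos t, sin t) = p (1, 0) * (f t * cos t) + p (0, 1) * (f t * sin t)" for t
    by (subst decomp) (simp add: algebra_simps)
  ultimately show ?case by simp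
next
  case (const c)
  have "trig_orthogonal (\<lambda>t. c * f t + 0 * f t)" by (intro trig_orthogonal_lincomb const.prems)
  then show ?case by (simp add: mult.commute)
next
  case (add p q)
  have "trig_orthogonal (\<lambda>t. 1 * (f t * p (cos t, sin t)) + 1 * (f t * q (cos t, sin t)))"
    by (rule trig_orthogonal_lincomb[OF add.IH(1)[OF add.prems] add.IH(2)[OF add.prems]])
  then show ?case by (simp add: distrib_left)
next
  case (mult p q)
  have "trig_orthogonal (\<lambda>t. (f t * p (cos t, sin t)) * q (cos t, sin t))"
    by (rule mult.IH(2)[OF mult.IH(1)[OF mult.prems]])
  then show ?case by (simp add: mult.assoc)
qed

definition circle_lift :: "(real \<Rightarrow> real) \<Rightarrow> real \<times> real \<Rightarrow> real" where
  "circle_lift g z = (if snd z \<ge> 0 then g (arccos (fst z)) else g (2*pi - arccos (fst z)))"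

lemma continuous_on_circle_lift:
  assumes gc: "continuous_on UNIV g" and g_2pi: "g (2*pi) = g 0"
  shows "continuous_on (sphere 0 1) (circle_lift g)"
proof -
  let ?upper = "sphere (0::real\<times>real) 1 \<inter> {z. snd z \<ge> 0}"
  let ?lower = "sphere (0::real\<times>real) 1 \<inter> {z. snd z \<le> 0}"
  have arccos_cont: "continuous_on A (\<lambda>z. arccos (fst z))" if "A \<subseteq> sphere 0 1"
    for A :: "(real \<times> real) set"
  proof (rule continuous_on_compose2[OF continuous_on_arccos'])
    have "\<bar>fst z\<bar> \<le> 1" if "z \<in> sphere 0 1" for z :: "real \<times> real"
      using that norm_fst_le[of "fst z" "snd z"] by simp
    with that show "fst ` A \<subseteq> {-1..1}"
      by (force simp: abs_le_iff)
  qed (intro continuous_intros)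
  have "continuous_on (?upper \<union> ?lower) (circle_lift g)"
    unfolding circle_lift_def
  proof (rule continuous_on_cases)
    show "closed ?upper" "closed ?lower"
      by (auto intro!: closed_Int closed_Collect_le continuous_intros)
    show "continuous_on ?upper (\<lambda>z. g (arccos (fst z)))"
      by (rule continuous_on_compose2[OF gc arccos_cont]) auto
    show "continuous_on ?lower (\<lambda>z. g (2*pi - arccos (fst z)))"
      by (rule continuous_on_compose2[OF gc continuous_on_diff[OF continuous_on_const arccos_cont]]) auto
    show "\<forall>z. z \<in> ?upper \<and> \<not> 0 \<le> snd z \<or> z \<in> ?lower \<and> 0 \<le> snd z \<longrightarrow>
          g (arccos (fst z)) = g (2*pi - arccos (fst z))"
    proof (intro allI impI)
      fix z :: "real \<times> real"
      assume "z \<in> ?upper \<and> \<not> 0 \<le> snd z \<or> z \<in> ?lower \<and> 0 \<le> snd z"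
      then have "snd z = 0" "norm z = 1" by auto
      then have "fst z = 1 \<or> fst z = -1"
        by (cases z) (auto simp: norm_Pair abs_if split: if_splits)
      then show "g (arccos (fst z)) = g (2*pi - arccos (fst z))"
        using g_2pi by auto
    qed
  qed
  moreover have "?upper \<union> ?lower = sphere 0 1" by auto
  ultimately show ?thesis by simp
qed

lemma circle_lift_cos_sin:
  assumes gp: "periodic_2pi g"
  shows "circle_lift g (cos t, sin t) = g t"
proof -
  have "circle_lift g (cos t, sin t) = g t" if t: "t \<in> {0..2*pi}" for t
  proof (cases "t \<le> pi")
    case True
    then show ?thesis
      using t sin_ge_zero[of t] by (simp add: circle_lift_def arccos_cos)
  next
    case False
    then have "arccos (cos t) = 2*pi - t"
      using t arccos_cos[of "2*pi - t"] by simp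
    moreover have "sin t \<ge> 0 \<Longrightarrow> t = 2*pi"
      using t False sin_lt_zero[of t] by (cases "t < 2*pi") auto
    ultimately show ?thesis
      using periodic_2pi_endpoints[OF gp] by (auto simp: circle_lift_def)
  qed
  moreover have "periodic_2pi (\<lambda>t. circle_lift g (cos t, sin t))"
    by (simp add: periodic_2pi_def)
  ultimately show ?thesis
    using periodic_2pi_eqI[of "\<lambda>t. circle_lift g (cos t, sin t)" g] gp by blast
qed

lemma trig_orthogonal_integral_square_le:
  assumes gc: "continuous_on UNIV g" and gp: "periodic_2pi g" and g: "trig_orthogonal g"
    and e: "e > 0"
  shows "integral {0..2*pi} (\<lambda>t. g t * g t) \<le> e * integral {0..2*pi} (\<lambda>t. \<bar>g t\<bar>)"
proof -
  have lift_cont: "continuous_on (sphere 0 1) (circle_lift g)"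
    by (intro continuous_on_circle_lift gc periodic_2pi_endpoints gp)
  obtain p where p: "polynomial_function p"
    "\<And>z. z \<in> sphere 0 1 \<Longrightarrow> norm (circle_lift g z - p z) < e"
    using Stone_Weierstrass_polynomial_function[OF compact_sphere lift_cont e] by blast
  define q where "q t = p (cos t, sin t)" for t
  have q_cont: "continuous_on UNIV q"
    unfolding q_def
    by (intro continuous_on_compose2[OF continuous_on_polymonial_function[OF p(1)]] continuous_intros)
       auto
  have q_approx: "\<bar>g t - q t\<bar> \<le> e" for t
    using p(2)[of "(cos t, sin t)"] circle_lift_cos_sin[OF gp, of t] by (simp add: q_def norm_Pair)
  have "((\<lambda>t. g t * q t * cos (of_int 0 * t)) has_integral 0) {0..2*pi}"
    unfolding q_def
    by (intro trig_orthogonalD trig_orthogonal_mult_polynomial g)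
       (simp add: real_polynomial_function_eq p(1))
  then have "integral {0..2*pi} (\<lambda>t. g t * q t) = 0"
    by (simp add: integral_unique)
  then have "integral {0..2*pi} (\<lambda>t. g t * g t)
      = integral {0..2*pi} (\<lambda>t. g t * g t) - integral {0..2*pi} (\<lambda>t. g t * q t)"
    by simp
  also have "\<dots> = integral {0..2*pi} (\<lambda>t. g t * g t - g t * q t)"
    by (rule integral_diff[symmetric]) (intro continuous_on_UNIV_integrable continuous_intros gc q_cont)+
  also have "\<dots> = integral {0..2*pi} (\<lambda>t. g t * (g t - q t))"
    by (simp add: right_diff_distrib)
  also have "\<dots> \<le> integral {0..2*pi} (\<lambda>t. e * \<bar>g t\<bar>)"
  proof (rule integral_le)
    fix t
    have "g t * (g t - q t) \<le> \<bar>g t\<bar> * \<bar>g t - q t\<bar>"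
      by (simp add: abs_mult[symmetric])
    also have "\<dots> \<le> \<bar>g t\<bar> * e"
      by (rule mult_left_mono[OF q_approx abs_ge_zero])
    finally show "g t * (g t - q t) \<le> e * \<bar>g t\<bar>"
      by (simp add: mult.commute)
  qed (intro continuous_on_UNIV_integrable continuous_intros gc q_cont)+
  finally show ?thesis by simp
qed

lemma trig_orthogonal_imp_zero:
  assumes gc: "continuous_on UNIV g" and gp: "periodic_2pi g" and g: "trig_orthogonal g"
  shows "g t = 0"
proof -
  define X where "X = integral {0..2*pi} (\<lambda>t. g t * g t)"
  define A where "A = integral {0..2*pi} (\<lambda>t. \<bar>g t\<bar>)"
  have sq_int: "((\<lambda>t. g t * g t) has_integral X) {0..2*pi}"
    unfolding X_def by (intro integrable_integral continuous_on_UNIV_integrable continuous_intros gc)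
  have "X \<ge> 0"
    using sq_int by (rule has_integral_nonneg) simp
  have "A \<ge> 0"
    unfolding A_def
    by (intro integral_nonneg continuous_on_UNIV_integrable continuous_intros gc) simp
  have "X \<le> 0"
  proof (rule field_le_epsilon)
    fix d :: real
    assume "d > 0"
    have "X \<le> d / (A + 1) * A"
      using trig_orthogonal_integral_square_le[OF gc gp g, of "d / (A + 1)"] \<open>A \<ge> 0\<close> \<open>d > 0\<close>
      by (simp add: X_def A_def)
    also have "\<dots> \<le> d"
      using \<open>A \<ge> 0\<close> \<open>d > 0\<close> by (simp add: field_simps)
    finally show "X \<le> 0 + d" by simp
  qed
  with \<open>X \<ge> 0\<close> have "X = 0" by simp
  have "continuous_on (cbox 0 (2*pi)) (\<lambda>t. g t * g t)"
    by (intro continuous_intros continuous_on_subset[OF gc]) auto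
  moreover have "((\<lambda>t. g t * g t) has_integral 0) (cbox 0 (2*pi))"
    using sq_int \<open>X = 0\<close> by simp
  ultimately have "g t * g t = 0" if "t \<in> {0..2*pi}" for t
    using has_integral_0_cbox_imp_0[of 0 "2*pi" "\<lambda>t. g t * g t" t] that pi_gt_zero by simp
  then have zero_on_period: "g t = 0" if "t \<in> {0..2*pi}" for t
    using that by simp
  have "periodic_2pi (\<lambda>_. 0)"
    by (simp add: periodic_2pi_def)
  from periodic_2pi_eqI[OF gp this zero_on_period] show ?thesis .
qed

section \<open>Convergence of the Fourier series of a \<open>C\<^sup>2\<close> function\<close>

lemma integral_cos_by_parts_twice:
  fixes f f' f'' :: "real \<Rightarrow> real"
  assumes f': "\<And>x. (f has_real_derivative f' x) (at x)"
    and f'': "\<And>x. (f' has_real_derivative f'' x) (at x)"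
    and "continuous_on UNIV f''" "f' (2*pi) = f' 0" "n \<noteq> 0"
  shows "integral {0..2*pi} (\<lambda>t. f t * cos (real n * t))
           = - integral {0..2*pi} (\<lambda>t. f'' t * cos (real n * t)) / (real n)\<^sup>2"
proof -
  have "((\<lambda>t. f t * cos (real n * t) + f'' t * cos (real n * t) / (real n)\<^sup>2) has_integral
         (f (2*pi) * sin (real n * (2*pi)) / real n + f' (2*pi) * cos (real n * (2*pi)) / (real n)\<^sup>2)
         - (f 0 * sin (real n * 0) / real n + f' 0 * cos (real n * 0) / (real n)\<^sup>2)) {0..2*pi}"
    using assms
    by (intro has_integral_derivative_real)
       (auto intro!: derivative_eq_intros f' f'' simp: field_simps power2_eq_square)
  moreover have "((\<lambda>t. f'' t * cos (real n * t) / (real n)\<^sup>2) has_integral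
                   integral {0..2*pi} (\<lambda>t. f'' t * cos (real n * t)) / (real n)\<^sup>2) {0..2*pi}"
    using assms
    by (intro has_integral_divide integrable_integral continuous_on_UNIV_integrable continuous_intros)
  ultimately have "((\<lambda>t. f t * cos (real n * t)) has_integral
                     0 - integral {0..2*pi} (\<lambda>t. f'' t * cos (real n * t)) / (real n)\<^sup>2) {0..2*pi}"
    using assms cos_of_int_mult_2pi[of "int n"] sin_of_int_mult_2pi[of "int n"]
    by (auto dest: has_integral_diff)
  then show ?thesis by (simp add: integral_unique)
qed

lemma integral_sin_by_parts_twice:
  fixes f f' f'' :: "real \<Rightarrow> real"
  assumes f': "\<And>x. (f has_real_derivative f' x) (at x)"
    and f'': "\<And>x. (f' has_real_derivative f'' x) (at x)"
    and "continuous_on UNIV f''" "f (2*pi) = f 0" "n \<noteq> 0"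
  shows "integral {0..2*pi} (\<lambda>t. f t * sin (real n * t))
           = - integral {0..2*pi} (\<lambda>t. f'' t * sin (real n * t)) / (real n)\<^sup>2"
proof -
  have "((\<lambda>t. f t * sin (real n * t) + f'' t * sin (real n * t) / (real n)\<^sup>2) has_integral
         (- f (2*pi) * cos (real n * (2*pi)) / real n + f' (2*pi) * sin (real n * (2*pi)) / (real n)\<^sup>2)
         - (- f 0 * cos (real n * 0) / real n + f' 0 * sin (real n * 0) / (real n)\<^sup>2)) {0..2*pi}"
    using assms
    by (intro has_integral_derivative_real)
       (auto intro!: derivative_eq_intros f' f'' simp: field_simps power2_eq_square)
  moreover have "((\<lambda>t. f'' t * sin (real n * t) / (real n)\<^sup>2) has_integral
                   integral {0..2*pi} (\<lambda>t. f'' t * sin (real n * t)) / (real n)\<^sup>2) {0..2*pi}"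
    using assms
    by (intro has_integral_divide integrable_integral continuous_on_UNIV_integrable continuous_intros)
  ultimately have "((\<lambda>t. f t * sin (real n * t)) has_integral
                     0 - integral {0..2*pi} (\<lambda>t. f'' t * sin (real n * t)) / (real n)\<^sup>2) {0..2*pi}"
    using assms cos_of_int_mult_2pi[of "int n"] sin_of_int_mult_2pi[of "int n"]
    by (auto dest: has_integral_diff)
  then show ?thesis by (simp add: integral_unique)
qed

lemma fourier_coeffs_bound:
  fixes h h' h'' :: "real \<Rightarrow> real"
  assumes h': "\<And>x. (h has_real_derivative h' x) (at x)"
    and h'': "\<And>x. (h' has_real_derivative h'' x) (at x)"
    and c: "continuous_on UNIV h''" and per: "periodic_2pi h"
    and B: "\<And>x. x \<in> {0..2*pi} \<Longrightarrow> \<bar>h'' x\<bar> \<le> B" and n: "n \<noteq> 0"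
  shows "\<bar>fourier_a h n\<bar> \<le> 2 * B / (real n)\<^sup>2" and "\<bar>fourier_b h n\<bar> \<le> 2 * B / (real n)\<^sup>2"
proof -
  note per' = periodic_2pi_endpoints[OF periodic_2pi_derivative[OF h' per]]
  note per0 = periodic_2pi_endpoints[OF per]
  have bound: "\<bar>integral {0..2*pi} (\<lambda>t. h'' t * w t)\<bar> \<le> B * (2*pi - 0)"
    if "continuous_on UNIV w" "\<And>t. \<bar>w t\<bar> \<le> 1" for w
  proof (rule integral_bound[where f="\<lambda>t. h'' t * w t", unfolded real_norm_def])
    show "continuous_on {0..2*pi} (\<lambda>t. h'' t * w t)"
      by (intro continuous_intros continuous_on_subset[OF c] continuous_on_subset[OF that(1)]) auto
    show "\<bar>h'' t * w t\<bar> \<le> B" if "t \<in> {0..2*pi}" for t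
      using mult_mono[OF B[OF that] \<open>\<bar>w t\<bar> \<le> 1\<close>] B[OF that] by (simp add: abs_mult)
  qed simp
  have "\<bar>fourier_a h n\<bar> = \<bar>integral {0..2*pi} (\<lambda>t. h'' t * cos (real n * t))\<bar> / (pi * (real n)\<^sup>2)"
    using integral_cos_by_parts_twice[OF h' h'' c per' n] n by (simp add: fourier_a_def abs_mult)
  also have "\<dots> \<le> B * (2*pi - 0) / (pi * (real n)\<^sup>2)"
    by (intro divide_right_mono bound continuous_intros) auto
  finally show "\<bar>fourier_a h n\<bar> \<le> 2 * B / (real n)\<^sup>2" by (simp add: mult.commute)
  have "\<bar>fourier_b h n\<bar> = \<bar>integral {0..2*pi} (\<lambda>t. h'' t * sin (real n * t))\<bar> / (pi * (real n)\<^sup>2)"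
    using integral_sin_by_parts_twice[OF h' h'' c per0 n] n by (simp add: fourier_b_def abs_mult)
  also have "\<dots> \<le> B * (2*pi - 0) / (pi * (real n)\<^sup>2)"
    by (intro divide_right_mono bound continuous_intros) auto
  finally show "\<bar>fourier_b h n\<bar> \<le> 2 * B / (real n)\<^sup>2" by (simp add: mult.commute)
qed

lemma summable_fourier_coeffs:
  fixes h h' h'' :: "real \<Rightarrow> real"
  assumes h': "\<And>x. (h has_real_derivative h' x) (at x)"
    and h'': "\<And>x. (h' has_real_derivative h'' x) (at x)"
    and c: "continuous_on UNIV h''" and per: "periodic_2pi h"
  shows "summable (\<lambda>n. \<bar>fourier_a h n\<bar> + \<bar>fourier_b h n\<bar>)"
proof -
  obtain B where B: "\<And>x. x \<in> {0..2*pi} \<Longrightarrow> \<bar>h'' x\<bar> \<le> B"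
  proof -
    have "bounded (h'' ` {0..2*pi})"
      by (intro compact_imp_bounded compact_continuous_image continuous_on_subset[OF c]) auto
    then obtain a where "\<forall>y \<in> h'' ` {0..2*pi}. norm y \<le> a"
      unfolding bounded_iff by blast
    then show ?thesis
      using that[of a] by simp
  qed
  show ?thesis
  proof (rule summable_comparison_test_ev)
    show "summable (\<lambda>n. 4 * B * inverse (real n ^ 2))"
      by (intro summable_mult inverse_power_summable) simp
    have "norm (\<bar>fourier_a h n\<bar> + \<bar>fourier_b h n\<bar>) \<le> 4 * B * inverse (real n ^ 2)" if "n \<ge> 1" for n
      using fourier_coeffs_bound[OF h' h'' c per B, of n] that B[of 0]
      by (simp add: divide_inverse)
    then show "\<forall>\<^sub>F n in sequentially. norm (\<bar>fourier_a h n\<bar> + \<bar>fourier_b h n\<bar>) \<le> 4 * B * inverse (real n ^ 2)"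
      unfolding eventually_sequentially by blast
  qed
qed

lemma integral_mult_uniform_limit:
  fixes f :: "nat \<Rightarrow> real \<Rightarrow> real"
  assumes lim: "uniform_limit {a..b} f g sequentially"
    and f: "\<And>n. continuous_on {a..b} (f n)" and w: "continuous_on {a..b} w"
  shows "(\<lambda>n. integral {a..b} (\<lambda>t. f n t * w t)) \<longlonglongrightarrow> integral {a..b} (\<lambda>t. g t * w t)"
proof -
  have "continuous_on {a..b} g"
    by (rule uniform_limit_theorem[OF _ lim]) (simp_all add: f)
  then have "bounded (g ` {a..b})" "bounded (w ` {a..b})"
    using w by (auto intro: compact_imp_bounded compact_continuous_image)
  then have "uniform_limit {a..b} (\<lambda>n t. f n t * w t) (\<lambda>t. g t * w t) sequentially"
    by (intro uniform_lim_mult lim uniform_limit_const)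
  then obtain I J where
    I: "\<And>n. ((\<lambda>t. f n t * w t) has_integral I n) {a..b}" and
    J: "((\<lambda>t. g t * w t) has_integral J) {a..b}" and "I \<longlonglongrightarrow> J"
    by (rule uniform_limit_integral) (auto intro!: continuous_intros f w)
  moreover have "(\<lambda>n. integral {a..b} (\<lambda>t. f n t * w t)) = I"
    by (rule ext) (rule integral_unique[OF I])
  ultimately show ?thesis
    using integral_unique[OF J] by simp
qed

lemma fourier_uniform_limit_integral_eq:
  assumes lim: "uniform_limit UNIV (\<lambda>N t. \<Sum>i<N. fourier_term h i t) S sequentially"
    and w: "continuous_on UNIV w"
    and terms: "\<And>i. ((\<lambda>t. fourier_term h i t * w t) has_integral
                   (if i = m then integral {0..2*pi} (\<lambda>t. h t * w t) else 0)) {0..2*pi}"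
  shows "integral {0..2*pi} (\<lambda>t. S t * w t) = integral {0..2*pi} (\<lambda>t. h t * w t)"
proof -
  have "(\<lambda>N. integral {0..2*pi} (\<lambda>t. (\<Sum>i<N. fourier_term h i t) * w t))
          \<longlonglongrightarrow> integral {0..2*pi} (\<lambda>t. S t * w t)"
    by (intro integral_mult_uniform_limit uniform_limit_on_subset[OF lim] continuous_on_sum
              continuous_on_fourier_term continuous_on_subset[OF w]) auto
  moreover have "integral {0..2*pi} (\<lambda>t. (\<Sum>i<N. fourier_term h i t) * w t)
                   = integral {0..2*pi} (\<lambda>t. h t * w t)" if "N > m" for N
  proof -
    have "((\<lambda>t. \<Sum>i<N. fourier_term h i t * w t) has_integral
            (\<Sum>i<N. if i = m then integral {0..2*pi} (\<lambda>t. h t * w t) else 0)) {0..2*pi}"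
      by (intro has_integral_sum terms) simp
    with that show ?thesis
      by (simp add: sum_distrib_right integral_unique)
  qed
  then have "(\<lambda>N. integral {0..2*pi} (\<lambda>t. (\<Sum>i<N. fourier_term h i t) * w t))
               \<longlonglongrightarrow> integral {0..2*pi} (\<lambda>t. h t * w t)"
    by (intro tendsto_eventually) (auto simp: eventually_sequentially intro: exI[of _ "Suc m"])
  ultimately show ?thesis
    by (rule LIMSEQ_unique)
qed

lemma fourier_series_uniform_limit_eq:
  assumes hc: "continuous_on UNIV h" and hp: "periodic_2pi h"
    and lim: "uniform_limit UNIV (\<lambda>N t. \<Sum>i<N. fourier_term h i t) S sequentially"
  shows "S t = h t"
proof -
  have partial_sums_cont: "continuous_on UNIV (\<lambda>t. \<Sum>i<N. fourier_term h i t)" for N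
    by (intro continuous_on_sum continuous_on_fourier_term)
  have Sc: "continuous_on UNIV S"
    by (rule uniform_limit_theorem[OF _ lim]) (simp_all add: partial_sums_cont)
  have pointwise: "(\<lambda>N. \<Sum>i<N. fourier_term h i t) \<longlonglongrightarrow> S t" for t
    by (rule tendsto_uniform_limitI[OF lim]) simp
  have "periodic_2pi S"
    unfolding periodic_2pi_def
  proof
    fix t
    show "S (t + 2*pi) = S t"
      using pointwise[of "t + 2*pi"] pointwise[of t] periodic_2pi_fourier_term
      by (simp add: periodic_2pi_def LIMSEQ_unique)
  qed
  have integrals: "((\<lambda>t. (h t - S t) * w t) has_integral 0) {0..2*pi}"
    if "continuous_on UNIV w" "integral {0..2*pi} (\<lambda>t. S t * w t) = integral {0..2*pi} (\<lambda>t. h t * w t)"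
    for w
  proof -
    have "((\<lambda>t. h t * w t - S t * w t) has_integral
            integral {0..2*pi} (\<lambda>t. h t * w t) - integral {0..2*pi} (\<lambda>t. S t * w t)) {0..2*pi}"
      by (intro has_integral_diff integrable_integral continuous_on_UNIV_integrable
                continuous_intros hc Sc that(1))
    with that(2) show ?thesis
      by (simp add: left_diff_distrib)
  qed
  have "trig_orthogonal (\<lambda>t. h t - S t)"
  proof (rule trig_orthogonalI)
    fix n :: nat
    show "((\<lambda>t. (h t - S t) * cos (real n * t)) has_integral 0) {0..2*pi}"
      by (intro integrals continuous_intros fourier_uniform_limit_integral_eq[OF lim, of _ n]
                has_integral_fourier_term_cos)
    show "((\<lambda>t. (h t - S t) * sin (real n * t)) has_integral 0) {0..2*pi}"
      by (intro integrals continuous_intros fourier_uniform_limit_integral_eq[OF lim, of _ n]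
                has_integral_fourier_term_sin)
  qed
  then have "h t - S t = 0"
    by (rule trig_orthogonal_imp_zero[rotated 2])
       (use hc Sc hp \<open>periodic_2pi S\<close> in \<open>auto intro: continuous_intros simp: periodic_2pi_def\<close>)
  then show ?thesis by simp
qed

lemma abs_fourier_term_le: "\<bar>fourier_term h n t\<bar> \<le> \<bar>fourier_a h n\<bar> + \<bar>fourier_b h n\<bar>"
proof -
  have "\<bar>fourier_term h n t\<bar> \<le> \<bar>fourier_a h n\<bar> * \<bar>cos (real n * t)\<bar> + \<bar>fourier_b h n\<bar> * \<bar>sin (real n * t)\<bar>"
    unfolding fourier_term_def abs_mult[symmetric] by (rule abs_triangle_ineq)
  also have "\<dots> \<le> \<bar>fourier_a h n\<bar> * 1 + \<bar>fourier_b h n\<bar> * 1"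
    by (intro add_mono mult_left_mono abs_cos_le_one abs_sin_le_one abs_ge_zero)
  finally show ?thesis by simp
qed

theorem fourier_series_sums:
  fixes h h' h'' :: "real \<Rightarrow> real"
  assumes h': "\<And>x. (h has_real_derivative h' x) (at x)"
    and h'': "\<And>x. (h' has_real_derivative h'' x) (at x)"
    and c: "continuous_on UNIV h''" and per: "periodic_2pi h"
  shows "(\<lambda>n. fourier_term h n t) sums h t"
proof -
  note coeffs = summable_fourier_coeffs[OF h' h'' c per]
  have "continuous_on UNIV h"
    using h' by (meson DERIV_isCont continuous_at_imp_continuous_on)
  moreover have "uniform_limit UNIV (\<lambda>N t. \<Sum>i<N. fourier_term h i t)
                   (\<lambda>t. \<Sum>n. fourier_term h n t) sequentially"
    by (rule Weierstrass_m_test[OF _ coeffs]) (simp add: abs_fourier_term_le)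
  ultimately have "(\<Sum>n. fourier_term h n t) = h t"
    by (rule fourier_series_uniform_limit_eq[OF _ per])
  moreover have "summable (\<lambda>n. fourier_term h n t)"
    by (rule summable_comparison_test[OF _ coeffs]) (simp add: abs_fourier_term_le)
  ultimately show ?thesis
    by (metis summable_sums)
qed

section \<open>Averaging over rotations by multiples of \<open>2\<pi>/k\<close>\<close>

lemma sum_cis_rotations:
  assumes k: "k > 0"
  shows "(\<Sum>j<k. cis (real n * (x + 2*pi*real j/real k)))
           = (if k dvd n then of_nat k * cis (real n * x) else 0)"
proof -
  define w where "w = cis (2*pi*real n/real k)"
  have "cis (real n * (x + 2*pi*real j/real k)) = cis (real n * x) * w ^ j" for j
  proof -
    have "real n * (x + 2*pi*real j/real k) = real n * x + real j * (2*pi*real n/real k)"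
      by (simp add: algebra_simps)
    then show ?thesis by (simp only: w_def Complex.DeMoivre cis_mult)
  qed
  then have sum_eq: "(\<Sum>j<k. cis (real n * (x + 2*pi*real j/real k))) = cis (real n * x) * (\<Sum>j<k. w ^ j)"
    by (simp add: sum_distrib_left)
  show ?thesis
  proof (cases "k dvd n")
    case True
    then obtain q where "n = k * q" by blast
    with k have "2*pi*real n/real k = 2*pi*real q"
      by simp
    then have "w = cis (2*pi*real q)"
      unfolding w_def by (rule arg_cong)
    also have "\<dots> = 1"
      by (rule cis_multiple_2pi) simp
    finally have "w = 1" .
    with True sum_eq show ?thesis by simp
  next
    case False
    have "w \<noteq> 1"
    proof
      assume "w = 1"
      then have "cos (2*pi*real n/real k) = 1"
        unfolding w_def by (metis cis.sel(1) one_complex.sel(1))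
      then obtain m :: int where "2*pi*real n/real k = of_int m * 2 * pi"
        using cos_one_2pi_int by blast
      with k have "int n = m * int k"
        by (simp add: field_simps) (metis of_int_eq_iff of_int_mult of_int_of_nat_eq)
      with False show False
        by (metis dvd_triv_right int_dvd_int_iff)
    qed
    moreover have "w ^ k = 1"
      unfolding w_def Complex.DeMoivre using k by simp
    ultimately have "(\<Sum>j<k. w ^ j) = 0"
      using sum_gp_strict[of w k] by simp
    with False sum_eq show ?thesis by simp
  qed
qed

lemma average_fourier_term_rotations:
  assumes "k > 0"
  shows "(1 / real k) * (\<Sum>j = 0..<k. fourier_term h n (s + 2*pi*real j/real k))
           = (if k dvd n then fourier_term h n s else 0)"
proof -
  have cos_sum: "(\<Sum>j<k. cos (real n * (s + 2*pi*real j/real k)))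
                   = (if k dvd n then real k * cos (real n * s) else 0)"
    using arg_cong[OF sum_cis_rotations[OF assms], of Re] by simp
  have sin_sum: "(\<Sum>j<k. sin (real n * (s + 2*pi*real j/real k)))
                   = (if k dvd n then real k * sin (real n * s) else 0)"
    using arg_cong[OF sum_cis_rotations[OF assms], of Im] by simp
  have "(\<Sum>j = 0..<k. fourier_term h n (s + 2*pi*real j/real k))
          = fourier_a h n * (\<Sum>j<k. cos (real n * (s + 2*pi*real j/real k)))
            + fourier_b h n * (\<Sum>j<k. sin (real n * (s + 2*pi*real j/real k)))"
    by (simp add: fourier_term_def sum.distrib sum_distrib_left atLeast0LessThan)
  then show ?thesis
    using assms unfolding cos_sum sin_sum by (simp add: fourier_term_def algebra_simps)
qed

section \<open>Order preserving sets\<close>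

lemma rotate_moving_frame:
  "cos \<theta> *\<^sub>R (a *\<^sub>R uvec (s + \<theta>) + b *\<^sub>R uvec' (s + \<theta>))
     - sin \<theta> *\<^sub>R perp (a *\<^sub>R uvec (s + \<theta>) + b *\<^sub>R uvec' (s + \<theta>))
   = a *\<^sub>R uvec s + b *\<^sub>R uvec' s"
  unfolding uvec_def uvec'_def perp_def prod_eq_iff
  by (simp add: cos_add sin_add) (use sin_cos_squared_add[of \<theta>] in algebra)

lemma ops_eq_hedgehog:
  fixes h :: "real \<Rightarrow> real"
  assumes dh: "\<And>x. h differentiable at x" and per: "periodic_2pi h" and k: "k > 0"
  shows "ops h k s = hedgehog (\<lambda>s. (1 / real k) * (\<Sum>j = 0..<k. h (s + 2*pi*real j/real k))
                                  - 1/2 * avg_width h) s"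
    (is "_ = hedgehog ?hk s")
proof -
  define \<theta> where "\<theta> j = 2*pi*real j/real k" for j
  have "((\<lambda>s. \<Sum>j = 0..<k. h (s + \<theta> j)) has_real_derivative (\<Sum>j = 0..<k. deriv h (s + \<theta> j))) (at s)"
    using dh DERIV_shift by (intro DERIV_sum) (blast intro: DERIV_deriv_iff_real_differentiable[THEN iffD2])
  then have "(?hk has_real_derivative (1 / real k) * (\<Sum>j = 0..<k. deriv h (s + \<theta> j)) - 0) (at s)"
    unfolding \<theta>_def by (intro DERIV_diff DERIV_cmult DERIV_const)
  then have deriv_hk: "deriv ?hk s = (1 / real k) * (\<Sum>j = 0..<k. deriv h (s + \<theta> j))"
    by (simp add: DERIV_imp_deriv)
  define F where "F j = h (s + \<theta> j) *\<^sub>R uvec s + deriv h (s + \<theta> j) *\<^sub>R uvec' s" for j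
  have summand: "cos (\<theta> j) *\<^sub>R hedgehog h (s + \<theta> j) - sin (\<theta> j) *\<^sub>R perp (hedgehog h (s + \<theta> j)) = F j"
    for j
    unfolding hedgehog_def F_def by (rule rotate_moving_frame)
  have "F k = F 0"
    using k per periodic_2pi_deriv[OF per] by (simp add: F_def \<theta>_def periodic_2pi_def)
  moreover have "F 0 + (\<Sum>j<k. F (Suc j)) = (\<Sum>j<k. F j) + F k"
    using sum.lessThan_Suc_shift[of F k] sum.lessThan_Suc[of F k] by simp
  ultimately have "(\<Sum>j = 1..k. F j) = (\<Sum>j = 0..<k. F j)"
    by (simp add: sum.atLeast1_atMost_eq atLeast0LessThan add.commute)
  also have "\<dots> = (\<Sum>j = 0..<k. h (s + \<theta> j)) *\<^sub>R uvec s + (\<Sum>j = 0..<k. deriv h (s + \<theta> j)) *\<^sub>R uvec' s"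
    unfolding F_def by (simp add: sum.distrib scaleR_sum_left)
  finally have sum_F: "(\<Sum>j = 1..k. F j) = \<dots>" .
  have "ops h k s = (1 / real k) *\<^sub>R (\<Sum>j = 1..k. F j) - (1/2 * avg_width h) *\<^sub>R uvec s"
    unfolding ops_def summand[unfolded \<theta>_def, symmetric] \<theta>_def ..
  also have "\<dots> = ?hk s *\<^sub>R uvec s + deriv ?hk s *\<^sub>R uvec' s"
    unfolding sum_F deriv_hk by (simp add: \<theta>_def algebra_simps)
  finally show ?thesis
    unfolding hedgehog_def .
qed

lemma smooth_fun_has_derivative:
  assumes "smooth_fun h"
  shows "((deriv ^^ n) h has_real_derivative (deriv ^^ Suc n) h x) (at x)"
  using assms by (simp add: smooth_fun_def DERIV_deriv_iff_real_differentiable)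

theorem proposition3p7:
  fixes h :: "real \<Rightarrow> real" and k :: nat
  assumes "smooth_fun h" and "periodic_2pi h" and "k > 2"
  defines "hk \<equiv> (\<lambda>s. (1 / real k) * (\<Sum>j = 0..<k. h (s + 2 * pi * real j / real k))
                        - 1 / 2 * avg_width h)"
  shows "(\<forall>s. ops h k s = hedgehog hk s)
       \<and> (\<forall>s. (\<lambda>n. if k dvd n \<and> n > 1
                    then fourier_a h n * cos (real n * s) + fourier_b h n * sin (real n * s)
                    else 0) sums hk s)"
proof -
  have h': "(h has_real_derivative deriv h x) (at x)"
    and h'': "(deriv h has_real_derivative deriv (deriv h) x) (at x)" for x
    using smooth_fun_has_derivative[OF assms(1), of 0 x] smooth_fun_has_derivative[OF assms(1), of 1 x]
    by simp_all
  have "continuous_on UNIV (deriv (deriv h))"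
    using smooth_fun_has_derivative[OF assms(1), of 2]
    by (intro continuous_at_imp_continuous_on) (auto simp: numeral_2_eq_2 intro: DERIV_isCont)
  note fourier = fourier_series_sums[OF h' h'' this assms(2)]
  have "ops h k s = hedgehog hk s" for s
    unfolding hk_def using h' assms(2,3) by (intro ops_eq_hedgehog) (auto simp: real_differentiable_def)
  moreover have "(\<lambda>n. if k dvd n \<and> n > 1 then fourier_term h n s else 0) sums hk s" for s
  proof -
    have "(\<lambda>n. (1 / real k) * (\<Sum>j = 0..<k. fourier_term h n (s + 2*pi*real j/real k)))
            sums ((1 / real k) * (\<Sum>j = 0..<k. h (s + 2*pi*real j/real k)))"
      by (intro sums_mult sums_sum fourier)
    then have "(\<lambda>n. if k dvd n then fourier_term h n s else 0)
                 sums ((1 / real k) * (\<Sum>j = 0..<k. h (s + 2*pi*real j/real k)))"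
      using assms(3) by (subst (asm) average_fourier_term_rotations) simp_all
    from sums_diff[OF this sums_single[of 0 "\<lambda>n. fourier_term h n s"]]
    have "(\<lambda>n. (if k dvd n then fourier_term h n s else 0) - (if n = 0 then fourier_term h n s else 0))
            sums hk s"
      by (simp add: hk_def fourier_term_def fourier_a_def avg_width_def)
    moreover have "(if k dvd n then fourier_term h n s else 0) - (if n = 0 then fourier_term h n s else 0)
                     = (if k dvd n \<and> n > 1 then fourier_term h n s else 0)" for n
      using assms(3) by (cases "n = 1") auto
    ultimately show ?thesis by simp
  qed
  ultimately show ?thesis
    unfolding fourier_term_def by blast
qed

end
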